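(* Let $X$ be a compact metric space, let $f_1,f_2:X\to X$ be continuous, and let $F=\{f_1,f_2\}$. Suppose there is a point $c\in X$ with $f_1(x)=c$ for all $x\in X$ and $f_2(c)=c$. If $F$ has the (Hausdorff metric) shadowing property, then $f_2$ has the shadowing property. Likewise, if $F$ has the (Hausdorff metric) average shadowing property, then $f_2$ has the average shadowing property.
   Context: Throughout, $(X,d)$ is a compact metric space, $\mathbb{N}=\{0,1,2,\dots\}$ and $\mathbb{Z}^+=\{1,2,\dots\}$. $\mathbb{K}(X)$ denotes the set of nonempty compact subsets of $X$, equipped with the Hausdorff metric $d_H(A,B)=\max\{\sup_{a\in A}\inf_{b\in B}d(a,b),\sup_{b\in B}\inf_{a\in A}d(a,b)\}$. A point $x\in X$ is identified with $\{x\}\in\mathbb{K}(X)$. Multiple mappings: for continuous $f_1,f_2:X\to X$, $F=\{f_1,f_2\}$ maps $x\in X$ to $F(x)=\{f_1(x),f_2(x)\}\in\mathbb{K}(X)$. For $n\ge1$, $F^n(x)=\{f_{i_1}f_{i_2}\cdots f_{i_n}(x): i_1,\dots,i_n\in\{1,2\}\}$, and $F^0(x)=\{x\}$. For $A\in\mathbb{K}(X)$, $F^n(A)=\bigcup_{a\in A}F^n(a)\in\mathbb{K}(X)$. Shadowing of $F$: a sequence $\{A_n\}_{n\ge0}\subset\mathbb{K}(X)$ with $A_0$ a singleton is a $\delta$-pseudo orbit of $F$ if $d_H(F(A_n),A_{n+1})\le\delta$ for all $n\in\mathbb{N}$. $F$ has the shadowing property if for every $\epsilon>0$ there is $\delta>0$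 such that for every $\delta$-pseudo orbit $\{A_n\}$ of $F$ there is $y\in X$ with $d_H(F^n(y),A_n)<\epsilon$ for all $n\in\mathbb{N}$. Average shadowing of $F$: a sequence $\{A_n\}_{n\ge0}\subset\mathbb{K}(X)$ with $A_0$ a singleton is a $\delta$-average-pseudo-orbit of $F$ if there is $N(\delta)>0$ such that for all $n\ge N(\delta)$ and all $k\in\mathbb{Z}^+$, $\frac1n\sum_{i=0}^{n-1}d_H(F(A_{i+k}),A_{i+k+1})<\delta$. $F$ has the average shadowing property if for every $\epsilon>0$ there is $\delta>0$ such that for every $\delta$-average-pseudo-orbit $\{A_n\}$ of $F$ there is $y\in X$ with $\limsup_{n\to\infty}\frac1n\sum_{i=0}^{n-1}d_H(F^i(y),A_i)<\epsilon$. For a single continuous map $f:X\to X$: a $\delta$-pseudo orbit is $\{x_n\}_{n\ge0}\subset X$ with $d(f(x_n),x_{n+1})\le\delta$ for all $n$; $f$ has the shadowing property if for every $\epsilon>0$ there is $\delta>0$ such that every $\delta$-pseudo orbit $\{x_n\}$ admits $y\in X$ with $d(f^n(y),x_n)<\epsilon$ for all $n\in\mathbb{N}$. A $\delta$-average-pseudo-orbit of $f$ is $\{x_n\}_{n\ge0}$ such that there is $N(\delta)>0$ with $\frac1n\sum_{i=0}^{n-1}d(f(x_{i+k}),x_{i+k+1})<\delta$ for all $n\ge N(\delta)$, $k\in\mathbb{Z}^+$; $f$ has the average shadowing property if for every $\epsilon>0$ there is $\delta>0$ such that every $\delta$-average-pseudo-orbit $\{x_n\}$ admits $y\in X$ with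 $\limsup_{n\to\infty}\frac1n\sum_{i=0}^{n-1}d(f^i(y),x_i)<\epsilon$. *)

theory Defs
  imports "HOL-Analysis.Analysis"
begin

definition hdist :: "'a::metric_space set \<Rightarrow> 'a set \<Rightarrow> real" where
  "hdist A B = max (SUP a\<in>A. infdist a B) (SUP b\<in>B. infdist b A)"

definition KX :: "'a::metric_space set \<Rightarrow> 'a set set" where
  "KX X = {A. A \<noteq> {} \<and> compact A \<and> A \<subseteq> X}"

definition Fset :: "('a \<Rightarrow> 'a) \<Rightarrow> ('a \<Rightarrow> 'a) \<Rightarrow> 'a set \<Rightarrow> 'a set" where
  "Fset f1 f2 A = (\<Union>a\<in>A. {f1 a, f2 a})"

fun Fpow :: "('a \<Rightarrow> 'a) \<Rightarrow> ('a \<Rightarrow> 'a) \<Rightarrow> nat \<Rightarrow> 'a \<Rightarrow> 'a set" where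
  "Fpow f1 f2 0 x = {x}"
| "Fpow f1 f2 (Suc n) x = Fset f1 f2 (Fpow f1 f2 n x)"

definition F_pseudo_orbit :: "'a::metric_space set \<Rightarrow> ('a \<Rightarrow> 'a) \<Rightarrow> ('a \<Rightarrow> 'a) \<Rightarrow> real \<Rightarrow> (nat \<Rightarrow> 'a set) \<Rightarrow> bool" where
  "F_pseudo_orbit X f1 f2 \<delta> A \<longleftrightarrow>
     (\<forall>n. A n \<in> KX X) \<and> (\<exists>x. A 0 = {x}) \<and>
     (\<forall>n. hdist (Fset f1 f2 (A n)) (A (Suc n)) \<le> \<delta>)"

definition F_shadowing :: "'a::metric_space set \<Rightarrow> ('a \<Rightarrow> 'a) \<Rightarrow> ('a \<Rightarrow> 'a) \<Rightarrow> bool" where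
  "F_shadowing X f1 f2 \<longleftrightarrow>
     (\<forall>\<epsilon>>0. \<exists>\<delta>>0. \<forall>A. F_pseudo_orbit X f1 f2 \<delta> A \<longrightarrow>
        (\<exists>y\<in>X. \<forall>n. hdist (Fpow f1 f2 n y) (A n) < \<epsilon>))"

definition F_avg_pseudo_orbit :: "'a::metric_space set \<Rightarrow> ('a \<Rightarrow> 'a) \<Rightarrow> ('a \<Rightarrow> 'a) \<Rightarrow> real \<Rightarrow> (nat \<Rightarrow> 'a set) \<Rightarrow> bool" where
  "F_avg_pseudo_orbit X f1 f2 \<delta> A \<longleftrightarrow>
     (\<forall>n. A n \<in> KX X) \<and> (\<exists>x. A 0 = {x}) \<and>
     (\<exists>N::nat. N > 0 \<and> (\<forall>n\<ge>N. \<forall>k\<ge>1.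
        (\<Sum>i<n. hdist (Fset f1 f2 (A (i + k))) (A (i + k + 1))) / real n < \<delta>))"

definition F_avg_shadowing :: "'a::metric_space set \<Rightarrow> ('a \<Rightarrow> 'a) \<Rightarrow> ('a \<Rightarrow> 'a) \<Rightarrow> bool" where
  "F_avg_shadowing X f1 f2 \<longleftrightarrow>
     (\<forall>\<epsilon>>0. \<exists>\<delta>>0. \<forall>A. F_avg_pseudo_orbit X f1 f2 \<delta> A \<longrightarrow>
        (\<exists>y\<in>X. limsup (\<lambda>n. ereal ((\<Sum>i<n. hdist (Fpow f1 f2 i y) (A i)) / real n)) < ereal \<epsilon>))"

definition pseudo_orbit :: "'a::metric_space set \<Rightarrow> ('a \<Rightarrow> 'a) \<Rightarrow> real \<Rightarrow> (nat \<Rightarrow> 'a) \<Rightarrow> bool" where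
  "pseudo_orbit X f \<delta> x \<longleftrightarrow> (\<forall>n. x n \<in> X) \<and> (\<forall>n. dist (f (x n)) (x (Suc n)) \<le> \<delta>)"

definition shadowing :: "'a::metric_space set \<Rightarrow> ('a \<Rightarrow> 'a) \<Rightarrow> bool" where
  "shadowing X f \<longleftrightarrow>
     (\<forall>\<epsilon>>0. \<exists>\<delta>>0. \<forall>x. pseudo_orbit X f \<delta> x \<longrightarrow>
        (\<exists>y\<in>X. \<forall>n. dist ((f ^^ n) y) (x n) < \<epsilon>))"

definition avg_pseudo_orbit :: "'a::metric_space set \<Rightarrow> ('a \<Rightarrow> 'a) \<Rightarrow> real \<Rightarrow> (nat \<Rightarrow> 'a) \<Rightarrow> bool" where
  "avg_pseudo_orbit X f \<delta> x \<longleftrightarrow> (\<forall>n. x n \<in> X) \<and>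
     (\<exists>N::nat. N > 0 \<and> (\<forall>n\<ge>N. \<forall>k\<ge>1.
        (\<Sum>i<n. dist (f (x (i + k))) (x (i + k + 1))) / real n < \<delta>))"

definition avg_shadowing :: "'a::metric_space set \<Rightarrow> ('a \<Rightarrow> 'a) \<Rightarrow> bool" where
  "avg_shadowing X f \<longleftrightarrow>
     (\<forall>\<epsilon>>0. \<exists>\<delta>>0. \<forall>x. avg_pseudo_orbit X f \<delta> x \<longrightarrow>
        (\<exists>y\<in>X. limsup (\<lambda>n. ereal ((\<Sum>i<n. dist ((f ^^ i) y) (x i)) / real n)) < ereal \<epsilon>))"

end

theory Submission
  imports Defs
begin

text \<open>A pseudo orbit x of f2 lifts to the F-pseudo orbit {x 0}, {c, x 1}, {c, x 2}, ...: since f1 collapses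
  everything onto the common fixed point c, F maps {c, x n} to {c, f2 (x n)} and the F-orbit of y is
  {c, f2^n y}. For doubletons sharing the point c, the Hausdorff distance is at most the distance of
  the other points and at least half of it, so shadowing (in the mean or not) transfers from F to f2
  at the cost of a factor 2.\<close>

lemma infdist_doubleton: "infdist x {a, b} = min (dist x a) (dist x b)"
  using infdist_Un_min[of "{a}" "{b}" x] by (simp add: insert_is_Un[of a "{b}"])

lemma SUP_doubleton: "(SUP u\<in>{p, q}. (g u :: real)) = max (g p) (g q)"
  by (simp add: cSup_insert sup_max)

lemma hdist_singletons: "hdist {a} {b} = dist a b"
  unfolding hdist_def by (simp add: dist_commute)

lemma hdist_doubletons_common:
  "hdist {c, a} {c, b} = max (min (dist a c) (dist a b)) (min (dist b c) (dist b a))"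
  unfolding hdist_def SUP_doubleton infdist_doubleton by (simp add: max_def min_def)

lemma hdist_doubletons_common_le: "hdist {c, a} {c, b} \<le> dist a b"
  unfolding hdist_doubletons_common by (simp add: dist_commute)

lemma dist_le_2_hdist_doubletons_common: "dist a b \<le> 2 * hdist {c, a} {c, b}"
proof -
  let ?H = "hdist {c, a} {c, b}"
  have a: "min (dist a c) (dist a b) \<le> ?H" and b: "min (dist b c) (dist a b) \<le> ?H"
    unfolding hdist_doubletons_common by (simp_all add: dist_commute)
  show ?thesis
  proof (cases "dist a b \<le> ?H")
    case True
    then show ?thesis using zero_le_dist[of a b] by linarith
  next
    case False
    then have "dist a c \<le> ?H" "dist b c \<le> ?H"
      using a b by (auto simp: min_def split: if_splits)
    moreover have "dist a b \<le> dist a c + dist b c"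
      using dist_triangle[of a b c] by (simp add: dist_commute)
    ultimately show ?thesis by linarith
  qed
qed

lemma limsup_less_if_le_2_mult:
  fixes u v :: "nat \<Rightarrow> real"
  assumes "\<And>n. u n \<le> 2 * v n" and "limsup (\<lambda>n. ereal (v n)) < ereal (\<epsilon> / 2)"
  shows "limsup (\<lambda>n. ereal (u n)) < ereal \<epsilon>"
proof -
  have "limsup (\<lambda>n. ereal (u n)) \<le> limsup (\<lambda>n. ereal 2 * ereal (v n))"
    by (rule Limsup_mono) (use assms(1) in simp)
  also have "\<dots> = ereal 2 * limsup (\<lambda>n. ereal (v n))"
    by (rule limsup_ereal_mult_left) simp
  also have "\<dots> < ereal \<epsilon>"
    using assms(2) by (cases "limsup (\<lambda>n. ereal (v n))") auto
  finally show ?thesis .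
qed

definition lift_orbit :: "'a \<Rightarrow> (nat \<Rightarrow> 'a) \<Rightarrow> nat \<Rightarrow> 'a set" where
  "lift_orbit c x n = (if n = 0 then {x 0} else {c, x n})"

locale collapsing_pair =
  fixes X :: "'a::metric_space set" and f1 f2 :: "'a \<Rightarrow> 'a" and c :: 'a
  assumes c_in: "c \<in> X" and f1_const: "\<forall>x\<in>X. f1 x = c" and f2_fix: "f2 c = c"
    and f2_maps: "f2 ` X \<subseteq> X"
begin

lemma funpow_f2_in: "y \<in> X \<Longrightarrow> (f2 ^^ n) y \<in> X"
  by (induction n) (use f2_maps in auto)

lemma Fpow_Suc_eq:
  assumes "y \<in> X"
  shows "Fpow f1 f2 (Suc n) y = {c, (f2 ^^ Suc n) y}"
proof (induction n)
  case 0
  then show ?case using assms f1_const by (simp add: Fset_def)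
next
  case (Suc n)
  then show ?case
    using funpow_f2_in[OF assms, of "Suc n"] f1_const f2_fix c_in by (auto simp: Fset_def)
qed

lemma dist_iterate_le_2_hdist_Fpow:
  assumes "y \<in> X"
  shows "dist ((f2 ^^ n) y) (x n) \<le> 2 * hdist (Fpow f1 f2 n y) (lift_orbit c x n)"
proof (cases n)
  case 0
  then show ?thesis by (simp add: lift_orbit_def hdist_singletons)
next
  case (Suc m)
  then show ?thesis
    using Fpow_Suc_eq[OF assms, of m] dist_le_2_hdist_doubletons_common
    by (simp add: lift_orbit_def)
qed

lemma hdist_Fset_lift_orbit_le:
  assumes "\<forall>n. x n \<in> X"
  shows "hdist (Fset f1 f2 (lift_orbit c x n)) (lift_orbit c x (Suc n)) \<le> dist (f2 (x n)) (x (Suc n))"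
proof -
  have "Fset f1 f2 (lift_orbit c x n) = {c, f2 (x n)}"
    using assms f1_const f2_fix c_in by (auto simp: Fset_def lift_orbit_def)
  then show ?thesis by (simp add: lift_orbit_def hdist_doubletons_common_le)
qed

lemma lift_orbit_in_KX: "\<forall>n. x n \<in> X \<Longrightarrow> lift_orbit c x n \<in> KX X"
  using c_in by (auto simp: KX_def lift_orbit_def)

lemma F_pseudo_orbit_lift_orbit:
  assumes "pseudo_orbit X f2 \<delta> x"
  shows "F_pseudo_orbit X f1 f2 \<delta> (lift_orbit c x)"
proof -
  have xX: "\<forall>n. x n \<in> X" and step: "\<And>n. dist (f2 (x n)) (x (Suc n)) \<le> \<delta>"
    using assms by (simp_all add: pseudo_orbit_def)
  have "lift_orbit c x 0 = {x 0}"
    by (simp add: lift_orbit_def)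
  moreover have "hdist (Fset f1 f2 (lift_orbit c x n)) (lift_orbit c x (Suc n)) \<le> \<delta>" for n
    using hdist_Fset_lift_orbit_le[OF xX, of n] step[of n] by linarith
  ultimately show ?thesis
    unfolding F_pseudo_orbit_def using lift_orbit_in_KX[OF xX] by blast
qed

lemma F_avg_pseudo_orbit_lift_orbit:
  assumes "avg_pseudo_orbit X f2 \<delta> x"
  shows "F_avg_pseudo_orbit X f1 f2 \<delta> (lift_orbit c x)"
proof -
  obtain N :: nat where xX: "\<forall>n. x n \<in> X" and "N > 0" and avg: "\<And>n k. n \<ge> N \<Longrightarrow> k \<ge> 1 \<Longrightarrow>
      (\<Sum>i<n. dist (f2 (x (i + k))) (x (i + k + 1))) / real n < \<delta>"
    using assms unfolding avg_pseudo_orbit_def by blast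
  have "(\<Sum>i<n. hdist (Fset f1 f2 (lift_orbit c x (i + k))) (lift_orbit c x (i + k + 1))) / real n
      \<le> (\<Sum>i<n. dist (f2 (x (i + k))) (x (i + k + 1))) / real n" for n k
    using hdist_Fset_lift_orbit_le[OF xX] by (intro divide_right_mono sum_mono) simp_all
  then have "\<forall>n\<ge>N. \<forall>k\<ge>1.
      (\<Sum>i<n. hdist (Fset f1 f2 (lift_orbit c x (i + k))) (lift_orbit c x (i + k + 1))) / real n < \<delta>"
    using avg by (meson order_le_less_trans)
  moreover have "lift_orbit c x 0 = {x 0}"
    by (simp add: lift_orbit_def)
  ultimately show ?thesis
    unfolding F_avg_pseudo_orbit_def using lift_orbit_in_KX[OF xX] \<open>N > 0\<close> by blast
qed

lemma shadowing_if_F_shadowing: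
  assumes "F_shadowing X f1 f2"
  shows "shadowing X f2"
  unfolding shadowing_def
proof (intro allI impI)
  fix \<epsilon> :: real
  assume "\<epsilon> > 0"
  then obtain \<delta> where "\<delta> > 0" and shadow: "\<And>A. F_pseudo_orbit X f1 f2 \<delta> A \<Longrightarrow>
      \<exists>y\<in>X. \<forall>n. hdist (Fpow f1 f2 n y) (A n) < \<epsilon> / 2"
    using assms unfolding F_shadowing_def by (meson half_gt_zero)
  have "\<exists>y\<in>X. \<forall>n. dist ((f2 ^^ n) y) (x n) < \<epsilon>" if po: "pseudo_orbit X f2 \<delta> x" for x
  proof -
    obtain y where "y \<in> X" and "\<forall>n. hdist (Fpow f1 f2 n y) (lift_orbit c x n) < \<epsilon> / 2"
      using shadow[OF F_pseudo_orbit_lift_orbit[OF po]] by blast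
    moreover have "dist ((f2 ^^ n) y) (x n) < \<epsilon>" if "y \<in> X"
        and "\<forall>n. hdist (Fpow f1 f2 n y) (lift_orbit c x n) < \<epsilon> / 2" for y n
      using dist_iterate_le_2_hdist_Fpow[OF that(1), of n x] spec[OF that(2), of n] by linarith
    ultimately show ?thesis by blast
  qed
  with \<open>\<delta> > 0\<close> show "\<exists>\<delta>>0. \<forall>x. pseudo_orbit X f2 \<delta> x \<longrightarrow>
      (\<exists>y\<in>X. \<forall>n. dist ((f2 ^^ n) y) (x n) < \<epsilon>)" by blast
qed

lemma avg_shadowing_if_F_avg_shadowing:
  assumes "F_avg_shadowing X f1 f2"
  shows "avg_shadowing X f2"
  unfolding avg_shadowing_def
proof (intro allI impI)
  fix \<epsilon> :: real
  assume "\<epsilon> > 0"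
  then obtain \<delta> where "\<delta> > 0" and shadow: "\<And>A. F_avg_pseudo_orbit X f1 f2 \<delta> A \<Longrightarrow>
      \<exists>y\<in>X. limsup (\<lambda>n. ereal ((\<Sum>i<n. hdist (Fpow f1 f2 i y) (A i)) / real n)) < ereal (\<epsilon> / 2)"
    using assms unfolding F_avg_shadowing_def by (meson half_gt_zero)
  have "\<exists>y\<in>X. limsup (\<lambda>n. ereal ((\<Sum>i<n. dist ((f2 ^^ i) y) (x i)) / real n)) < ereal \<epsilon>"
    if po: "avg_pseudo_orbit X f2 \<delta> x" for x
  proof -
    obtain y where y: "y \<in> X" and lim: "limsup (\<lambda>n. ereal
        ((\<Sum>i<n. hdist (Fpow f1 f2 i y) (lift_orbit c x i)) / real n)) < ereal (\<epsilon> / 2)"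
      using shadow[OF F_avg_pseudo_orbit_lift_orbit[OF po]] by blast
    have "(\<Sum>i<n. dist ((f2 ^^ i) y) (x i)) \<le> 2 * (\<Sum>i<n. hdist (Fpow f1 f2 i y) (lift_orbit c x i))"
      for n unfolding sum_distrib_left by (intro sum_mono dist_iterate_le_2_hdist_Fpow[OF y])
    then have "(\<Sum>i<n. dist ((f2 ^^ i) y) (x i)) / real n
        \<le> 2 * ((\<Sum>i<n. hdist (Fpow f1 f2 i y) (lift_orbit c x i)) / real n)" for n
      by (simp add: divide_right_mono)
    then have "limsup (\<lambda>n. ereal ((\<Sum>i<n. dist ((f2 ^^ i) y) (x i)) / real n)) < ereal \<epsilon>"
      using lim by (rule limsup_less_if_le_2_mult)
    with y show ?thesis ..
  qed
  with \<open>\<delta> > 0\<close> show "\<exists>\<delta>>0. \<forall>x. avg_pseudo_orbit X f2 \<delta> x \<longrightarrow>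
      (\<exists>y\<in>X. limsup (\<lambda>n. ereal ((\<Sum>i<n. dist ((f2 ^^ i) y) (x i)) / real n)) < ereal \<epsilon>)" by blast
qed

end

theorem theorem3p2:
  fixes X :: "'a::metric_space set" and f1 f2 :: "'a \<Rightarrow> 'a" and c :: 'a
  assumes "compact X" and "X \<noteq> {}"
    and "continuous_on X f1" and "f1 ` X \<subseteq> X"
    and "continuous_on X f2" and "f2 ` X \<subseteq> X"
    and "c \<in> X" and "\<forall>x\<in>X. f1 x = c" and "f2 c = c"
  shows "(F_shadowing X f1 f2 \<longrightarrow> shadowing X f2)
       \<and> (F_avg_shadowing X f1 f2 \<longrightarrow> avg_shadowing X f2)"
proof -
  interpret collapsing_pair X f1 f2 c
    using assms by unfold_locales
  show ?thesis
    using shadowing_if_F_shadowing avg_shadowing_if_F_avg_shadowing by blast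
qed

end
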